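(* For every integer $n\ge2$, $R^p(n)\le \frac1n\cot\!\left(\frac{\pi}{2n}\right)$ (which is $<\tfrac{2}{\pi}$).
   Context: A qubit POVM is a finite family $\{\Pi_i\}_{i=1}^n$ of positive semidefinite operators summing to $\mathbb{I}$; it simulates $\{M_{a|x}\}$ if $M_{a|x}=\sum_i p(a|x,i)\Pi_i$ with $p(a|x,i)\ge0$, $\sum_a p(a|x,i)=1$. $\mathcal{P}^p_r$ is the family of two-outcome POVMs $\{\tfrac12(\mathbb{I}\pm r\hat n\cdot\vec\sigma)\}$ over all unit vectors $\hat n=(n_x,0,n_z)$. $R^p(n)$ is the supremum of $r$ such that some $n$-outcome qubit POVM simulates $\mathcal{P}^p_r$. *)

theory Defs
  imports "HOL-Analysis.Analysis"
begin

type_synonym qop = "complex^2^2"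

definition sigma_x :: qop where
  "sigma_x = (\<chi> i j. if i = j then 0 else 1)"

definition sigma_z :: qop where
  "sigma_z = (\<chi> i j. if i = j then (if i = 1 then 1 else -1) else 0)"

definition psd :: "qop \<Rightarrow> bool" where
  "psd A \<longleftrightarrow> (\<forall>v::complex^2.
      let q = (\<Sum>i\<in>UNIV. \<Sum>j\<in>UNIV. cnj (v$i) * A$i$j * v$j) in Im q = 0 \<and> 0 \<le> Re q)"

definition is_povm :: "nat \<Rightarrow> (nat \<Rightarrow> qop) \<Rightarrow> bool" where
  "is_povm n E \<longleftrightarrow> (\<forall>i<n. psd (E i)) \<and> (\<Sum>i<n. E i) = mat 1"

text \<open>The target family P^p_r: measurement x = (n_x, n_z) with n_x^2 + n_z^2 = 1,
  outcome a = True for +, False for -.\<close>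
definition target_meas :: "real \<Rightarrow> real \<times> real \<Rightarrow> bool \<Rightarrow> qop" where
  "target_meas r x a = (1/2::real) *\<^sub>R
      (mat 1 + (if a then 1 else -1) *\<^sub>R (r *\<^sub>R (fst x *\<^sub>R sigma_x + snd x *\<^sub>R sigma_z)))"

definition unit_xz :: "(real \<times> real) set" where
  "unit_xz = {x. (fst x)\<^sup>2 + (snd x)\<^sup>2 = 1}"

definition simulates_target :: "nat \<Rightarrow> (nat \<Rightarrow> qop) \<Rightarrow> real \<Rightarrow> bool" where
  "simulates_target n E r \<longleftrightarrow>
     (\<exists>p :: bool \<Rightarrow> real \<times> real \<Rightarrow> nat \<Rightarrow> real.
        \<forall>x\<in>unit_xz.
          (\<forall>a i. i < n \<longrightarrow> 0 \<le> p a x i) \<and>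
          (\<forall>i<n. p True x i + p False x i = 1) \<and>
          (\<forall>a. target_meas r x a = (\<Sum>i<n. p a x i *\<^sub>R E i)))"

definition Rp :: "nat \<Rightarrow> real" where
  "Rp n = Sup {r. \<exists>E. is_povm n E \<and> simulates_target n E r}"

end

theory Submission
  imports Defs
begin

text \<open>
  Write a POVM element as \<open>M = (t I + b\<^sub>x \<sigma>\<^sub>x + b\<^sub>y \<sigma>\<^sub>y + b\<^sub>z \<sigma>\<^sub>z)/2\<close> and let \<open>w = (b\<^sub>x + i b\<^sub>z)/2\<close>
  be its Bloch vector in the xz-plane; positivity gives \<open>|w| \<le> t/2\<close>, and the traces of a POVM
  add up to 2, so \<open>\<Sum> |w\<^sub>i| \<le> 1\<close>. Pairing the simulation identity for the direction
  \<open>(sin \<theta>, -cos \<theta>)\<close> with the response functions \<open>p(+|x,i) - p(-|x,i) \<in> [-1,1]\<close> gives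
  \<open>r \<le> \<Sum> |w\<^sub>i| |sin (\<theta> - arg w\<^sub>i)|\<close> for every \<open>\<theta>\<close>. It remains to find \<open>\<theta>\<close> making the right-hand
  side at most \<open>cot(\<pi>/2n)/n\<close> times \<open>\<Sum> |w\<^sub>i|\<close>. Reduce the angles modulo \<open>\<pi>\<close>, sort them to
  \<open>a\<^sub>0 \<le> \<dots> \<le> a\<^sub>n\<^sub>-\<^sub>1\<close>, close up with \<open>a\<^sub>n = a\<^sub>0 + \<pi>\<close>, and average the function at consecutive
  vertices with weights \<open>tan((a\<^sub>k\<^sub>+\<^sub>1 - a\<^sub>k)/2)\<close>: by the half-angle formula each summand telescopes,
  the weighted sum is exactly \<open>2 \<Sum> |w\<^sub>i|\<close>, while by Jensen for the convex \<open>tan\<close> the weights add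
  up to at least \<open>n tan(\<pi>/2n)\<close>. So the function is small at some vertex.
\<close>

section \<open>Trigonometry\<close>

lemma tan_gt_self:
  fixes x :: real
  assumes "0 < x" "x < pi/2"
  shows "x < tan x"
proof -
  have deriv: "DERIV (\<lambda>y. tan y - y) y :> inverse ((cos y)\<^sup>2) - 1" if "0 \<le> y" "y \<le> x" for y
    using that assms cos_gt_zero_pi[of y] by (auto intro!: derivative_eq_intros)
  obtain z where z: "0 < z" "z < x"
    and mvt: "(tan x - x) - (tan 0 - 0) = (x - 0) * (inverse ((cos z)\<^sup>2) - 1)"
    using MVT2[OF assms(1) deriv] by auto
  have cos_pos: "0 < cos z" using z assms cos_gt_zero_pi[of z] by auto
  have "cos z < 1" using z assms cos_monotone_0_pi[of 0 z] pi_gt_zero by simp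
  then have "cos z * cos z < 1 * 1" using cos_pos by (intro mult_strict_mono) auto
  then have "(cos z)\<^sup>2 < 1" by (simp add: power2_eq_square)
  then have "1 < inverse ((cos z)\<^sup>2)" using cos_pos by (simp add: one_less_inverse)
  then have "0 < x * (inverse ((cos z)\<^sup>2) - 1)" using assms by simp
  then show ?thesis using mvt by simp
qed

lemma cot_div_lt_two_div_pi:
  assumes "2 \<le> n"
  shows "cot (pi / (2 * real n)) / real n < 2 / pi"
proof -
  define t where "t = pi / (2 * real n)"
  have t: "0 < t" "t < pi / 2" using assms by (auto simp: field_simps t_def)
  have "t < tan t" using tan_gt_self[OF t] .
  then have "cot t < 1 / t"
    using t tan_gt_zero[OF t] by (simp add: cot_altdef field_simps)
  then have "cot t / real n < (1 / t) / real n" using assms by (intro divide_strict_right_mono) auto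
  also have "(1 / t) / real n = 2 / pi" unfolding t_def using assms by (simp add: field_simps)
  finally show ?thesis unfolding t_def .
qed

lemma cot_pi_div_pos:
  assumes "2 \<le> n"
  shows "0 < cot (pi / (2 * real n))"
  using assms tan_gt_zero[of "pi / (2 * real n)"] by (simp add: cot_altdef field_simps)

lemma convex_on_tan: "convex_on {0..<pi/2} tan"
proof (rule convex_on_realI[where f' = "\<lambda>x. inverse ((cos x)\<^sup>2)"])
  fix x :: real assume "x \<in> {0..<pi/2}"
  then show "(tan has_real_derivative inverse ((cos x)\<^sup>2)) (at x)"
    using cos_gt_zero_pi[of x] by simp
next
  fix x y :: real assume xy: "x \<in> {0..<pi/2}" "y \<in> {0..<pi/2}" "x \<le> y"
  have "0 < cos y" using xy cos_gt_zero_pi[of y] by auto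
  moreover have "cos y \<le> cos x" using xy by (intro cos_monotone_0_pi_le) auto
  ultimately show "inverse ((cos x)\<^sup>2) \<le> inverse ((cos y)\<^sup>2)"
    by (simp add: le_imp_inverse_le power_mono)
qed simp

lemma abs_sin_add_int_mult_pi: "\<bar>sin (x + real_of_int k * pi)\<bar> = \<bar>sin x\<bar>"
proof -
  have "sin (real_of_int k * pi) = 0" "\<bar>cos (real_of_int k * pi)\<bar> = 1"
    using sin_npi_int[of k] cos_npi_int[of k] by (simp_all only: mult.commute) simp
  then show ?thesis by (simp add: sin_add abs_mult)
qed

lemma tan_half_diff_mult_sin_add:
  fixes x y :: real
  assumes "cos ((y - x)/2) \<noteq> 0"
  shows "tan ((y - x)/2) * (sin x + sin y) = cos x - cos y"
proof -
  have "sin x + sin y = 2 * sin ((x + y)/2) * cos ((y - x)/2)"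
    using sin_plus_sin[of y x] by (simp add: add.commute)
  moreover have "cos x - cos y = 2 * sin ((x + y)/2) * sin ((y - x)/2)"
    using cos_diff_cos[of x y] by simp
  ultimately show ?thesis using assms by (simp add: tan_def field_simps)
qed

lemma tan_half_diff_mult_abs_sin_add:
  fixes u v :: real
  assumes "u \<le> v" "v - u < pi" "0 \<le> u" "v \<le> pi"
  shows "tan ((v - u)/2) * (\<bar>sin u\<bar> + \<bar>sin v\<bar>) = cos u - cos v"
proof -
  have "cos ((v - u)/2) \<noteq> 0" using assms cos_gt_zero_pi[of "(v - u)/2"] by auto
  moreover have "\<bar>sin u\<bar> = sin u" "\<bar>sin v\<bar> = sin v" using assms sin_ge_zero by auto
  ultimately show ?thesis using tan_half_diff_mult_sin_add by simp
qed

section \<open>Choosing a good angle\<close>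

lemma sum_tan_half_gap_abs_sin:
  fixes a :: "nat \<Rightarrow> real"
  assumes mono: "\<And>i j. i \<le> j \<Longrightarrow> j \<le> n \<Longrightarrow> a i \<le> a j"
    and closed: "a n = a 0 + pi"
    and gaps: "\<And>k. k < n \<Longrightarrow> a (Suc k) - a k < pi"
    and p: "p < n"
  shows "(\<Sum>k<n. tan ((a (Suc k) - a k)/2) * (\<bar>sin (a k - a p)\<bar> + \<bar>sin (a (Suc k) - a p)\<bar>)) = 2"
proof -
  let ?F = "\<lambda>k. tan ((a (Suc k) - a k)/2) * (\<bar>sin (a k - a p)\<bar> + \<bar>sin (a (Suc k) - a p)\<bar>)"
  define C where "C k = cos (a k - a p)" for k
  \<comment> \<open>Before \<open>p\<close> the angles relative to \<open>a p\<close> lie in \<open>[-\<pi>, 0]\<close>, from \<open>p\<close> on in \<open>[0, \<pi>]\<close>.\<close>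
  have "?F k = C (Suc k) - C k" if "k < p" for k
  proof -
    have "a k \<le> a (Suc k)" "a (Suc k) \<le> a p" "a 0 \<le> a k" "a p \<le> a n"
      using that p mono by auto
    then have "tan (((a (Suc k) - a p + pi) - (a k - a p + pi))/2)
        * (\<bar>sin (a k - a p + pi)\<bar> + \<bar>sin (a (Suc k) - a p + pi)\<bar>)
        = cos (a k - a p + pi) - cos (a (Suc k) - a p + pi)"
      using gaps[of k] that p closed by (intro tan_half_diff_mult_abs_sin_add) auto
    then show ?thesis by (simp add: C_def)
  qed
  then have "(\<Sum>k\<in>{0..<p}. ?F k) = (\<Sum>k\<in>{0..<p}. C (Suc k) - C k)"
    by (intro sum.cong) auto
  also have "\<dots> = C p - C 0" by (rule sum_Suc_diff') simp
  finally have before: "(\<Sum>k\<in>{0..<p}. ?F k) = C p - C 0" .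
  have "?F k = C k - C (Suc k)" if "p \<le> k" "k < n" for k
  proof -
    have "a k \<le> a (Suc k)" "a p \<le> a k" "a 0 \<le> a p" "a (Suc k) \<le> a n"
      using that mono by auto
    then have "tan (((a (Suc k) - a p) - (a k - a p))/2)
        * (\<bar>sin (a k - a p)\<bar> + \<bar>sin (a (Suc k) - a p)\<bar>) = cos (a k - a p) - cos (a (Suc k) - a p)"
      using gaps[of k] that closed by (intro tan_half_diff_mult_abs_sin_add) auto
    then show ?thesis by (simp add: C_def)
  qed
  then have "(\<Sum>k\<in>{p..<n}. ?F k) = (\<Sum>k\<in>{p..<n}. (- C (Suc k)) - (- C k))"
    by (intro sum.cong) auto
  also have "\<dots> = C p - C n" using sum_Suc_diff'[of p n "\<lambda>k. - C k"] p by simp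
  finally have after: "(\<Sum>k\<in>{p..<n}. ?F k) = C p - C n" .
  have "C p = 1" "C n = - C 0"
    using closed cos_periodic_pi[of "a 0 - a p"] by (simp_all add: C_def algebra_simps)
  moreover have "{..<n} = {0..<p} \<union> {p..<n}" using p by auto
  ultimately show ?thesis using before after by (simp add: sum.union_disjoint)
qed

lemma sum_tan_half_gap_ge:
  fixes a :: "nat \<Rightarrow> real"
  assumes n: "1 \<le> n"
    and closed: "a n = a 0 + pi"
    and gaps: "\<And>k. k < n \<Longrightarrow> 0 \<le> a (Suc k) - a k \<and> a (Suc k) - a k < pi"
  shows "real n * tan (pi / (2 * real n)) \<le> (\<Sum>k<n. tan ((a (Suc k) - a k)/2))"
proof -
  have "(\<Sum>k<n. a (Suc k) - a k) = pi"
    using sum_Suc_diff'[of 0 n a] closed by (simp add: atLeast0LessThan)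
  then have mean: "(\<Sum>k<n. (1/real n) *\<^sub>R ((a (Suc k) - a k)/2)) = pi / (2 * real n)"
    by (simp add: sum_divide_distrib[symmetric] sum_distrib_left[symmetric])
  have "tan (\<Sum>k<n. (1/real n) *\<^sub>R ((a (Suc k) - a k)/2))
        \<le> (\<Sum>k<n. (1/real n) * tan ((a (Suc k) - a k)/2))"
  proof (rule convex_on_sum[OF _ _ convex_on_tan])
    show "{..<n} \<noteq> {}" using n by (simp add: lessThan_empty_iff)
    show "(a (Suc k) - a k)/2 \<in> {0..<pi/2}" if "k \<in> {..<n}" for k
      using that gaps[of k] by auto
  qed (use n in auto)
  then have "tan (pi / (2 * real n)) \<le> (\<Sum>k<n. tan ((a (Suc k) - a k)/2)) / real n"
    unfolding mean by (simp add: sum_divide_distrib[symmetric])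
  then show ?thesis using n by (simp add: field_simps)
qed

lemma sum_tan_half_gap_weighted_vertex_values:
  fixes a r \<psi> :: "nat \<Rightarrow> real"
  assumes mono: "\<And>i j. i \<le> j \<Longrightarrow> j \<le> n \<Longrightarrow> a i \<le> a j"
    and closed: "a n = a 0 + pi"
    and gaps: "\<And>k. k < n \<Longrightarrow> a (Suc k) - a k < pi"
    and vertices: "\<And>i. i < n \<Longrightarrow> \<psi> i \<in> a ` {..<n}"
  defines "f \<equiv> \<lambda>\<theta>. \<Sum>i<n. r i * \<bar>sin (\<theta> - \<psi> i)\<bar>"
  shows "(\<Sum>k<n. tan ((a (Suc k) - a k)/2) * (f (a k) + f (a (Suc k)))) = 2 * (\<Sum>i<n. r i)"
proof -
  let ?t = "\<lambda>k. tan ((a (Suc k) - a k)/2)"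
  have "(\<Sum>k<n. ?t k * (f (a k) + f (a (Suc k))))
      = (\<Sum>k<n. \<Sum>i<n. r i * (?t k * (\<bar>sin (a k - \<psi> i)\<bar> + \<bar>sin (a (Suc k) - \<psi> i)\<bar>)))"
    unfolding f_def by (simp add: sum_distrib_left sum.distrib[symmetric] algebra_simps)
  also have "\<dots> = (\<Sum>i<n. r i * (\<Sum>k<n. ?t k * (\<bar>sin (a k - \<psi> i)\<bar> + \<bar>sin (a (Suc k) - \<psi> i)\<bar>)))"
    by (simp only: sum_distrib_left) (rule sum.swap)
  also have "\<dots> = (\<Sum>i<n. r i * 2)"
  proof (rule sum.cong)
    fix i assume "i \<in> {..<n}"
    then obtain p where "p < n" "\<psi> i = a p" using vertices by blast
    then show "r i * (\<Sum>k<n. ?t k * (\<bar>sin (a k - \<psi> i)\<bar> + \<bar>sin (a (Suc k) - \<psi> i)\<bar>)) = r i * 2"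
      using sum_tan_half_gap_abs_sin[OF mono closed gaps] by simp
  qed simp
  also have "\<dots> = 2 * (\<Sum>i<n. r i)" by (simp add: sum_distrib_right[symmetric] mult.commute)
  finally show ?thesis .
qed

lemma exists_le_of_weighted_sum_le:
  fixes w x :: "'a \<Rightarrow> real"
  assumes "finite A" and w: "\<And>k. k \<in> A \<Longrightarrow> 0 \<le> w k" and "0 < sum w A"
    and "(\<Sum>k\<in>A. w k * x k) \<le> c * sum w A"
  shows "\<exists>k\<in>A. x k \<le> c"
proof -
  have "A \<noteq> {}" using \<open>0 < sum w A\<close> by auto
  define m where "m = Min (x ` A)"
  have m_le: "m \<le> x k" if "k \<in> A" for k unfolding m_def using \<open>finite A\<close> that by simp
  have "m \<in> x ` A" unfolding m_def using \<open>finite A\<close> \<open>A \<noteq> {}\<close> by (intro Min_in) auto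
  then obtain j where j: "j \<in> A" "x j = m" by auto
  have "m * sum w A = (\<Sum>k\<in>A. w k * m)" by (simp add: sum_distrib_left mult.commute)
  also have "\<dots> \<le> (\<Sum>k\<in>A. w k * x k)" using w m_le by (intro sum_mono mult_left_mono) auto
  also have "\<dots> \<le> c * sum w A" by (rule assms(4))
  finally have "m \<le> c" using \<open>0 < sum w A\<close> by (simp add: mult_le_cancel_right_pos)
  then show ?thesis using j by auto
qed

lemma exists_vertex_weighted_abs_sin_le:
  fixes a r \<psi> :: "nat \<Rightarrow> real"
  assumes n: "2 \<le> n" and r: "\<And>i. i < n \<Longrightarrow> 0 \<le> r i"
    and mono: "\<And>i j. i \<le> j \<Longrightarrow> j \<le> n \<Longrightarrow> a i \<le> a j"
    and closed: "a n = a 0 + pi"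
    and gaps: "\<And>k. k < n \<Longrightarrow> a (Suc k) - a k < pi"
    and vertices: "\<And>i. i < n \<Longrightarrow> \<psi> i \<in> a ` {..<n}"
  shows "\<exists>\<theta>. (\<Sum>i<n. r i * \<bar>sin (\<theta> - \<psi> i)\<bar>) \<le> (\<Sum>i<n. r i) * (cot (pi / (2 * real n)) / real n)"
proof -
  define f where "f = (\<lambda>\<theta>. \<Sum>i<n. r i * \<bar>sin (\<theta> - \<psi> i)\<bar>)"
  define t where "t = (\<lambda>k. tan ((a (Suc k) - a k)/2))"
  define c where "c = (\<Sum>i<n. r i) * (cot (pi / (2 * real n)) / real n)"
  have angle: "0 < pi / (2 * real n)" "pi / (2 * real n) < pi / 2" using n by (auto simp: field_simps)
  have t_nonneg: "0 \<le> t k" if "k < n" for k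
    using that mono[of k "Suc k"] gaps[of k] tan_gt_zero[of "(a (Suc k) - a k)/2"]
    unfolding t_def by (cases "a (Suc k) = a k") auto
  have jensen: "real n * tan (pi / (2 * real n)) \<le> sum t {..<n}"
    unfolding t_def using n mono gaps closed by (intro sum_tan_half_gap_ge) auto
  have jensen_pos: "0 < real n * tan (pi / (2 * real n))"
    using n tan_gt_zero[OF angle] by simp
  have "(\<Sum>k<n. t k * (f (a k) + f (a (Suc k)))) = 2 * (\<Sum>i<n. r i)"
    unfolding t_def f_def by (rule sum_tan_half_gap_weighted_vertex_values[OF mono closed gaps vertices])
  also have "\<dots> = 2 * c * (real n * tan (pi / (2 * real n)))"
    unfolding c_def using n tan_gt_zero[OF angle] by (simp add: cot_altdef field_simps)
  also have "\<dots> \<le> 2 * c * sum t {..<n}"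
    using jensen r cot_pi_div_pos[OF n] unfolding c_def
    by (intro mult_left_mono mult_nonneg_nonneg divide_nonneg_nonneg sum_nonneg) auto
  finally obtain k where "k < n" "f (a k) + f (a (Suc k)) \<le> 2 * c"
    using exists_le_of_weighted_sum_le[of "{..<n}" t] t_nonneg jensen jensen_pos by fastforce
  then have "f (a k) \<le> c \<or> f (a (Suc k)) \<le> c" by linarith
  then show ?thesis unfolding f_def c_def by blast
qed

lemma obtain_sorted_closed_angles:
  fixes \<psi> :: "nat \<Rightarrow> real"
  assumes range: "\<And>i. i < n \<Longrightarrow> 0 \<le> \<psi> i \<and> \<psi> i < pi"
    and distinct: "i < n" "j < n" "\<psi> i \<noteq> \<psi> j"
  obtains a :: "nat \<Rightarrow> real" where
    "\<And>i j. i \<le> j \<Longrightarrow> j \<le> n \<Longrightarrow> a i \<le> a j" "a n = a 0 + pi"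
    "\<And>k. k < n \<Longrightarrow> a (Suc k) - a k < pi" "\<And>i. i < n \<Longrightarrow> \<psi> i \<in> a ` {..<n}"
proof -
  define xs where "xs = sort (map \<psi> [0..<n])"
  have len: "length xs = n" and set_xs: "set xs = \<psi> ` {..<n}" unfolding xs_def by auto
  have xs_mono: "xs!i \<le> xs!j" if "i \<le> j" "j < n" for i j
    using that sorted_nth_mono[of xs] len by (simp add: xs_def)
  have xs_range: "0 \<le> xs!k \<and> xs!k < pi" if "k < n" for k
    using that set_xs len nth_mem[of k xs] range by auto
  have xs_index: "\<exists>k<n. xs!k = \<psi> i" if "i < n" for i
    using that set_xs len by (auto simp: in_set_conv_nth[symmetric])
  have "xs!0 < xs!(n-1)"
  proof (rule ccontr)
    assume "\<not> ?thesis"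
    then have all_equal: "xs!k = xs!0" if "k < n" for k
      using that xs_mono[of 0 k] xs_mono[of k "n-1"] by fastforce
    obtain k l where "k < n" "xs!k = \<psi> i" "l < n" "xs!l = \<psi> j"
      using xs_index distinct by blast
    then show False using all_equal[of k] all_equal[of l] distinct by simp
  qed
  define a where "a = (\<lambda>k. if k < n then xs!k else xs!0 + pi)"
  show ?thesis
  proof
    show "a i \<le> a j" if "i \<le> j" "j \<le> n" for i j
    proof (cases "j < n")
      case True
      then show ?thesis using that xs_mono by (simp add: a_def)
    next
      case False
      then show ?thesis using that xs_range[of i] xs_range[of 0] by (cases "i < n") (auto simp: a_def)
    qed
    show "a n = a 0 + pi" using distinct by (simp add: a_def)
    show "a (Suc k) - a k < pi" if "k < n" for k
    proof (cases "Suc k < n")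
      case True
      then show ?thesis using xs_range[of k] xs_range[of "Suc k"] by (simp add: a_def)
    next
      case False
      then have "k = n - 1" using that by simp
      then show ?thesis using that \<open>xs!0 < xs!(n-1)\<close> by (simp add: a_def)
    qed
    show "\<psi> i \<in> a ` {..<n}" if i: "i < n" for i
    proof -
      obtain k where "k < n" "xs!k = \<psi> i" using xs_index[OF i] by blast
      then have "\<psi> i = a k" by (simp add: a_def)
      then show ?thesis using \<open>k < n\<close> by blast
    qed
  qed
qed

theorem exists_angle_weighted_abs_sin_le:
  fixes r \<phi> :: "nat \<Rightarrow> real"
  assumes n: "2 \<le> n" and r: "\<And>i. i < n \<Longrightarrow> 0 \<le> r i"
  shows "\<exists>\<theta>. (\<Sum>i<n. r i * \<bar>sin (\<theta> - \<phi> i)\<bar>) \<le> (\<Sum>i<n. r i) * (cot (pi / (2 * real n)) / real n)"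
proof -
  define \<psi> where "\<psi> i = \<phi> i - real_of_int \<lfloor>\<phi> i / pi\<rfloor> * pi" for i
  have \<psi>_range: "0 \<le> \<psi> i \<and> \<psi> i < pi" if "i < n" for i
  proof -
    have "real_of_int \<lfloor>\<phi> i / pi\<rfloor> * pi \<le> \<phi> i" "\<phi> i < real_of_int \<lfloor>\<phi> i / pi\<rfloor> * pi + pi"
      using floor_divide_lower[OF pi_gt_zero] floor_divide_upper[OF pi_gt_zero, of "\<phi> i"]
      by (simp_all add: distrib_right)
    then show ?thesis by (simp add: \<psi>_def)
  qed
  have \<psi>_sin: "\<bar>sin (\<theta> - \<psi> i)\<bar> = \<bar>sin (\<theta> - \<phi> i)\<bar>" for \<theta> i
  proof -
    have "\<theta> - \<psi> i = (\<theta> - \<phi> i) + real_of_int \<lfloor>\<phi> i / pi\<rfloor> * pi" by (simp add: \<psi>_def)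
    then show ?thesis by (simp only: abs_sin_add_int_mult_pi)
  qed
  have "\<exists>\<theta>. (\<Sum>i<n. r i * \<bar>sin (\<theta> - \<psi> i)\<bar>) \<le> (\<Sum>i<n. r i) * (cot (pi / (2 * real n)) / real n)"
  proof (cases "\<exists>i<n. \<exists>j<n. \<psi> i \<noteq> \<psi> j")
    case True
    then obtain i j where "i < n" "j < n" "\<psi> i \<noteq> \<psi> j" by blast
    then obtain a where mono: "\<And>i j. i \<le> j \<Longrightarrow> j \<le> n \<Longrightarrow> a i \<le> a j"
      and closed: "a n = a 0 + pi" and gaps: "\<And>k. k < n \<Longrightarrow> a (Suc k) - a k < pi"
      and vertices: "\<And>i. i < n \<Longrightarrow> \<psi> i \<in> a ` {..<n}"
      using obtain_sorted_closed_angles[where n = n and \<psi> = \<psi>, OF \<psi>_range] by blast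
    show ?thesis by (rule exists_vertex_weighted_abs_sin_le[OF n r mono closed gaps vertices])
  next
    case False
    have "0 < n" using n by simp
    then have \<psi>_const: "\<psi> i = \<psi> 0" if "i < n" for i using False that by blast
    have "(\<Sum>i<n. r i * \<bar>sin (\<psi> 0 - \<psi> i)\<bar>) = 0"
      by (rule sum.neutral) (auto dest: \<psi>_const)
    moreover have "0 \<le> (\<Sum>i<n. r i) * (cot (pi / (2 * real n)) / real n)"
      using r cot_pi_div_pos[OF n] by (intro mult_nonneg_nonneg divide_nonneg_nonneg sum_nonneg) auto
    ultimately show ?thesis by (intro exI[of _ "\<psi> 0"]) simp
  qed
  then show ?thesis by (simp add: \<psi>_sin)
qed

section \<open>Qubit effects\<close>

lemma quadratic_nonneg_imp_sq_le:
  fixes \<alpha> \<delta> b :: real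
  assumes "0 \<le> \<delta>" "\<And>t. 0 \<le> \<alpha> + 2 * b * t + \<delta> * t\<^sup>2"
  shows "b\<^sup>2 \<le> \<alpha> * \<delta>"
proof (cases "\<delta> = 0")
  case True
  have "b = 0"
  proof (rule ccontr)
    assume "b \<noteq> 0"
    have "0 \<le> \<alpha> + 2 * b * (-(\<alpha> + 1) / (2 * b)) + \<delta> * (-(\<alpha> + 1) / (2 * b))\<^sup>2" by (rule assms(2))
    then show False using True \<open>b \<noteq> 0\<close> by (simp add: field_simps)
  qed
  then show ?thesis using True by simp
next
  case False
  then have "0 < \<delta>" using assms(1) by simp
  moreover have "0 \<le> \<alpha> + 2 * b * (- b / \<delta>) + \<delta> * (- b / \<delta>)\<^sup>2" by (rule assms(2))
  ultimately show ?thesis by (simp add: field_simps power2_eq_square)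
qed

lemma psd_diag_nonneg_and_offdiag_bound:
  assumes "psd A"
  shows "0 \<le> Re (A$1$1)" "0 \<le> Re (A$2$2)"
    "(Re (A$1$2 + A$2$1) / 2)\<^sup>2 \<le> Re (A$1$1) * Re (A$2$2)"
proof -
  have form: "0 \<le> Re (\<Sum>i\<in>UNIV. \<Sum>j\<in>UNIV. cnj (v$i) * A$i$j * v$j)" for v :: "complex^2"
    using assms unfolding psd_def Let_def by blast
  have quadratic: "0 \<le> Re (A$1$1) + 2 * (Re (A$1$2 + A$2$1) / 2) * t + Re (A$2$2) * t\<^sup>2" for t :: real
    using form[of "\<chi> i. if i = 1 then 1 else complex_of_real t"]
    by (simp add: sum_2 power2_eq_square algebra_simps add_divide_distrib)
  show "0 \<le> Re (A$1$1)" using quadratic[of 0] by simp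
  show diag2: "0 \<le> Re (A$2$2)" using form[of "\<chi> i. if i = 1 then 0 else 1"] by (simp add: sum_2)
  show "(Re (A$1$2 + A$2$1) / 2)\<^sup>2 \<le> Re (A$1$1) * Re (A$2$2)"
    by (rule quadratic_nonneg_imp_sq_le[OF diag2 quadratic])
qed

text \<open>For \<open>M = (t I + b\<^sub>x \<sigma>\<^sub>x + b\<^sub>y \<sigma>\<^sub>y + b\<^sub>z \<sigma>\<^sub>z)/2\<close> this is \<open>(b\<^sub>x + i b\<^sub>z)/2\<close>.\<close>
definition bloch_xz :: "qop \<Rightarrow> complex" where
  "bloch_xz M = Complex (Re (M$1$2 + M$2$1) / 2) ((Re (M$1$1) - Re (M$2$2)) / 2)"

definition xz_pairing :: "real \<times> real \<Rightarrow> qop \<Rightarrow> real" where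
  "xz_pairing u M = fst u * Re (bloch_xz M) + snd u * Im (bloch_xz M)"

lemma norm_bloch_xz_le_half_trace:
  assumes "psd M"
  shows "cmod (bloch_xz M) \<le> (Re (M$1$1) + Re (M$2$2)) / 2"
proof (rule power2_le_imp_le)
  note psd = psd_diag_nonneg_and_offdiag_bound[OF assms]
  have "((Re (M$1$1) + Re (M$2$2)) / 2)\<^sup>2 = ((Re (M$1$1) - Re (M$2$2)) / 2)\<^sup>2 + Re (M$1$1) * Re (M$2$2)"
    by (simp add: power2_eq_square field_simps)
  then show "(cmod (bloch_xz M))\<^sup>2 \<le> ((Re (M$1$1) + Re (M$2$2)) / 2)\<^sup>2"
    using psd(3) unfolding bloch_xz_def cmod_power2 complex.sel by linarith
  show "0 \<le> (Re (M$1$1) + Re (M$2$2)) / 2" using psd(1,2) by simp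
qed

lemma sum_half_trace_povm:
  assumes "is_povm n E"
  shows "(\<Sum>i<n. (Re (E i $ 1 $ 1) + Re (E i $ 2 $ 2)) / 2) = 1"
proof -
  have sum_E: "(\<Sum>i<n. E i) = mat 1" using assms unfolding is_povm_def by simp
  have "(\<Sum>i<n. E i) $ 1 $ 1 = 1" "(\<Sum>i<n. E i) $ 2 $ 2 = 1" unfolding sum_E by (simp_all add: mat_def)
  then have "(\<Sum>i<n. Re (E i $ 1 $ 1)) = 1" "(\<Sum>i<n. Re (E i $ 2 $ 2)) = 1"
    by (simp_all add: Re_sum[symmetric])
  then show ?thesis by (simp add: sum_divide_distrib[symmetric] sum.distrib)
qed

lemma xz_pairing_sum: "xz_pairing u (\<Sum>i<(n::nat). p i *\<^sub>R E i) = (\<Sum>i<n. p i * xz_pairing u (E i))"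
  by (induction n) (simp_all add: xz_pairing_def bloch_xz_def algebra_simps add_divide_distrib diff_divide_distrib)

lemma xz_pairing_target_meas:
  assumes "u \<in> unit_xz"
  shows "xz_pairing u (target_meas r u a) = (if a then r / 2 else - r / 2)"
proof -
  have "xz_pairing u (target_meas r u a) = (if a then 1 else -1) * r * ((fst u)\<^sup>2 + (snd u)\<^sup>2) / 2"
    unfolding xz_pairing_def bloch_xz_def target_meas_def
    by (simp add: sigma_x_def sigma_z_def mat_def power2_eq_square algebra_simps add_divide_distrib)
  then show ?thesis using assms unfolding unit_xz_def by (cases a) auto
qed

lemma abs_xz_pairing_polar:
  "\<bar>xz_pairing (sin \<theta>, - cos \<theta>) M\<bar> = cmod (bloch_xz M) * \<bar>sin (\<theta> - Arg (bloch_xz M))\<bar>"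
proof -
  let ?w = "bloch_xz M"
  have "Re ?w = cmod ?w * cos (Arg ?w)" "Im ?w = cmod ?w * sin (Arg ?w)"
    by (cases "?w = 0"; simp add: cos_Arg sin_Arg)+
  then have "xz_pairing (sin \<theta>, - cos \<theta>) M = cmod ?w * sin (\<theta> - Arg ?w)"
    unfolding xz_pairing_def sin_diff by (simp add: algebra_simps)
  then show ?thesis by (simp add: abs_mult)
qed

section \<open>Simulating the target family\<close>

lemma simulates_target_le_sum_abs_xz_pairing:
  assumes sim: "simulates_target n E r" and u: "u \<in> unit_xz"
  shows "r \<le> (\<Sum>i<n. \<bar>xz_pairing u (E i)\<bar>)"
proof -
  obtain p :: "bool \<Rightarrow> real \<times> real \<Rightarrow> nat \<Rightarrow> real" where p: "\<forall>x\<in>unit_xz.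
      (\<forall>a i. i < n \<longrightarrow> 0 \<le> p a x i) \<and> (\<forall>i<n. p True x i + p False x i = 1) \<and>
      (\<forall>a. target_meas r x a = (\<Sum>i<n. p a x i *\<^sub>R E i))"
    using sim unfolding simulates_target_def by blast
  have nonneg: "\<And>a i. i < n \<Longrightarrow> 0 \<le> p a u i"
    and total: "\<And>i. i < n \<Longrightarrow> p True u i + p False u i = 1"
    and simulation: "\<And>a. target_meas r u a = (\<Sum>i<n. p a u i *\<^sub>R E i)"
    using p u by auto
  have "r = xz_pairing u (target_meas r u True) - xz_pairing u (target_meas r u False)"
    using xz_pairing_target_meas[OF u] by simp
  also have "\<dots> = (\<Sum>i<n. (p True u i - p False u i) * xz_pairing u (E i))"
    unfolding simulation xz_pairing_sum by (simp add: sum_subtractf[symmetric] left_diff_distrib)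
  also have "\<dots> \<le> (\<Sum>i<n. \<bar>xz_pairing u (E i)\<bar>)"
  proof (rule sum_mono)
    fix i assume "i \<in> {..<n}"
    then have "\<bar>p True u i - p False u i\<bar> \<le> 1"
      using nonneg[of i True] nonneg[of i False] total[of i] by (simp add: abs_le_iff)
    then have "\<bar>(p True u i - p False u i) * xz_pairing u (E i)\<bar> \<le> \<bar>xz_pairing u (E i)\<bar>"
      by (simp add: abs_mult mult_left_le_one_le)
    then show "(p True u i - p False u i) * xz_pairing u (E i) \<le> \<bar>xz_pairing u (E i)\<bar>" by linarith
  qed
  finally show ?thesis .
qed

lemma simulates_target_le:
  assumes n: "2 \<le> n" and povm: "is_povm n E" and sim: "simulates_target n E r"
  shows "r \<le> cot (pi / (2 * real n)) / real n"
proof -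
  define K where "K = cot (pi / (2 * real n)) / real n"
  define w where "w i = bloch_xz (E i)" for i
  obtain \<theta> where \<theta>: "(\<Sum>i<n. cmod (w i) * \<bar>sin (\<theta> - Arg (w i))\<bar>) \<le> (\<Sum>i<n. cmod (w i)) * K"
    unfolding K_def using exists_angle_weighted_abs_sin_le[OF n, of "\<lambda>i. cmod (w i)" "\<lambda>i. Arg (w i)"]
    by auto
  have "(\<Sum>i<n. cmod (w i)) \<le> (\<Sum>i<n. (Re (E i $ 1 $ 1) + Re (E i $ 2 $ 2)) / 2)"
    unfolding w_def using povm unfolding is_povm_def by (intro sum_mono norm_bloch_xz_le_half_trace) auto
  then have norms: "(\<Sum>i<n. cmod (w i)) \<le> 1" using sum_half_trace_povm[OF povm] by simp
  have "(sin \<theta>, - cos \<theta>) \<in> unit_xz" unfolding unit_xz_def by simp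
  then have "r \<le> (\<Sum>i<n. \<bar>xz_pairing (sin \<theta>, - cos \<theta>) (E i)\<bar>)"
    by (rule simulates_target_le_sum_abs_xz_pairing[OF sim])
  also have "\<dots> = (\<Sum>i<n. cmod (w i) * \<bar>sin (\<theta> - Arg (w i))\<bar>)"
    unfolding w_def abs_xz_pairing_polar ..
  also have "\<dots> \<le> (\<Sum>i<n. cmod (w i)) * K" by (rule \<theta>)
  also have "\<dots> \<le> K"
    using mult_right_mono[OF norms, of K] cot_pi_div_pos[OF n] by (simp add: K_def)
  finally show ?thesis unfolding K_def .
qed

lemma trivial_povm_simulates_target_zero:
  assumes "1 \<le> n"
  shows "is_povm n (\<lambda>i. if i = 0 then mat 1 else 0)"
    and "simulates_target n (\<lambda>i. if i = 0 then mat 1 else 0) 0"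
proof -
  let ?E = "\<lambda>i::nat. if i = 0 then mat 1 else (0 :: qop)"
  have sum_E: "(\<Sum>i<n. ?E i) = mat 1" using assms by (simp add: sum.delta)
  have "psd (mat 1)" "psd 0" unfolding psd_def Let_def by (simp_all add: sum_2 mat_def)
  then show "is_povm n ?E" unfolding is_povm_def using sum_E by auto
  have "target_meas 0 x a = (\<Sum>i<n. (1/2::real) *\<^sub>R ?E i)" for x a
    unfolding target_meas_def by (simp add: scaleR_sum_right[symmetric] sum_E)
  then show "simulates_target n ?E 0"
    unfolding simulates_target_def by (intro exI[of _ "\<lambda>a x i. 1/2"]) auto
qed

theorem proposition4:
  fixes n :: nat
  assumes "n \<ge> 2"
  shows "Rp n \<le> cot (pi / (2 * real n)) / real n \<and> cot (pi / (2 * real n)) / real n < 2 / pi"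
proof
  \<comment> \<open>Nonemptiness matters: the supremum of the empty set is an unspecified real.\<close>
  have "1 \<le> n" using assms by simp
  then have "0 \<in> {r. \<exists>E. is_povm n E \<and> simulates_target n E r}"
    using trivial_povm_simulates_target_zero by blast
  then show "Rp n \<le> cot (pi / (2 * real n)) / real n"
    unfolding Rp_def using simulates_target_le[OF assms] by (intro cSup_least) auto
  show "cot (pi / (2 * real n)) / real n < 2 / pi" by (rule cot_div_lt_two_div_pi[OF assms])
qed

end
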